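(* The cost-LPR calculus and the cost-BC calculus are incomplete: there is a MaxSAT instance $\Gamma$ encoded with blocking variables with $\mathrm{cost}(\Gamma)=1$ such that no derivation from $\Gamma$ in the cost-LPR calculus (and no derivation in the cost-BC calculus) contains a unit clause $b$ for a blocking variable $b$; in particular neither calculus proves $\mathrm{cost}(\Gamma)\ge 1$.
   Context: Literals, clauses, CNFs (multisets of clauses), $\mathrm{Var}(\Gamma)$. A substitution $\sigma$ maps variables to $0$, $1$ or literals, extended by $\sigma(\lnot x)=\lnot\sigma(x)$; $(\sigma\circ\tau)(x)=\sigma(\tau(x))$. A (partial) assignment has $\sigma(x)\in\{0,1,x\}$; its domain is $\sigma^{-1}(\{0,1\})$; total means all variables assigned. $C{\upharpoonright}_\sigma$: apply $\sigma$ to literals and simplify; $\Gamma{\upharpoonright}_\sigma$ is the multiset of $C{\upharpoonright}_\sigma\ne1$, $C\in\Gamma$. $\lnot C$ is the partial assignment falsifying all literals of $C$. $\Gamma\vdash_1 C$ means unit propagation on $\Gamma{\upharpoonright}_{\lnot C}$ derives the empty clause; $\Gamma\vdash_1\Delta$ means this holds for all $D\in\Delta$. A MaxSAT instance encoded with blocking variables is a CNF $\Gamma=H\cup\{C_1\lor b_1,\dots,C_m\lor b_m\}$ with distinct fresh blocking variables $b_i$; $\mathrm{cost}(\alpha)=\sum_i\alpha(b_i)$ for total $\alpha$; $\mathrm{cost}(\Gamma)=\min\{\mathrm{cost}(\alpha):\alpha\models\Gamma\}$. $C$ is cost-LPR w.r.t. $\Gamma$ if there is a partial assignment $\sigma$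 with the same domain as $\lnot C$, differing from $\lnot C$ on exactly one variable, such that (1) $\Gamma{\upharpoonright}_{\lnot C}\vdash_1(\Gamma\cup\{C\}){\upharpoonright}_\sigma$ and (2) $\mathrm{cost}(\tau\circ\sigma)\le\mathrm{cost}(\tau)$ for all total $\tau\supseteq\lnot C$. A clause $C\lor\ell$ is cost-BC w.r.t. $\Gamma$ and the literal $\ell$ if for every clause $D\lor\lnot\ell\in\Gamma$, $C\lor D$ is a tautology, and $\ell$ is not a blocking variable with positive polarity. A derivation in the cost-LPR (resp. cost-BC) calculus from $\Gamma$ is a sequence $D_1,\dots,D_t$ where each $D_i$ is in $\Gamma$, or follows from earlier clauses by weakening (from $A$ infer $B\supseteq A$) or resolution (from $A\lor x$, $B\lor\lnot x$ infer $A\lor B$), or is cost-LPR (resp. cost-BC) w.r.t. $\Gamma\cup\{D_1,\dots,D_{i-1}\}$ with $\mathrm{Var}(D_i)\subseteq\mathrm{Var}(\Gamma)$. *)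

theory Defs
  imports "HOL-Library.Multiset"
begin

datatype 'v lit = Pos 'v | Neg 'v

fun lit_var :: "'v lit \<Rightarrow> 'v" where
  "lit_var (Pos x) = x" | "lit_var (Neg x) = x"

fun lit_neg :: "'v lit \<Rightarrow> 'v lit" where
  "lit_neg (Pos x) = Neg x" | "lit_neg (Neg x) = Pos x"

type_synonym 'v clause = "'v lit set"
type_synonym 'v cnf = "'v clause multiset"

definition tautology :: "'v clause \<Rightarrow> bool" where
  "tautology C \<longleftrightarrow> (\<exists>x. Pos x \<in> C \<and> Neg x \<in> C)"

definition vars_clause :: "'v clause \<Rightarrow> 'v set" where
  "vars_clause C = lit_var ` C"

definition vars_cnf :: "'v cnf \<Rightarrow> 'v set" where
  "vars_cnf \<Gamma> = (\<Union>C\<in>set_mset \<Gamma>. vars_clause C)"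

datatype 'v sval = F0 | T1 | L "'v lit"

type_synonym 'v subst = "'v \<Rightarrow> 'v sval"

fun sval_neg :: "'v sval \<Rightarrow> 'v sval" where
  "sval_neg F0 = T1" | "sval_neg T1 = F0" | "sval_neg (L l) = L (lit_neg l)"

fun subst_lit :: "'v subst \<Rightarrow> 'v lit \<Rightarrow> 'v sval" where
  "subst_lit \<sigma> (Pos x) = \<sigma> x"
| "subst_lit \<sigma> (Neg x) = sval_neg (\<sigma> x)"

definition is_partial_assignment :: "'v subst \<Rightarrow> bool" where
  "is_partial_assignment \<sigma> \<longleftrightarrow> (\<forall>x. \<sigma> x = F0 \<or> \<sigma> x = T1 \<or> \<sigma> x = L (Pos x))"

definition sdom :: "'v subst \<Rightarrow> 'v set" where
  "sdom \<sigma> = {x. \<sigma> x = F0 \<or> \<sigma> x = T1}"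

definition neg_clause :: "'v clause \<Rightarrow> 'v subst" where
  "neg_clause C = (\<lambda>x. if Pos x \<in> C then F0 else if Neg x \<in> C then T1 else L (Pos x))"

text \<open>Restriction of a clause: \<open>None\<close> stands for the constant 1 (satisfied or
  tautological result); otherwise the literals mapped to 0 are removed.\<close>
definition restrict_clause :: "'v subst \<Rightarrow> 'v clause \<Rightarrow> 'v clause option" where
  "restrict_clause \<sigma> C =
     (if (\<exists>l\<in>C. subst_lit \<sigma> l = T1) then None
      else (let D = {m. \<exists>l\<in>C. subst_lit \<sigma> l = L m} in
            if tautology D then None else Some D))"

definition restrict_cnf :: "'v subst \<Rightarrow> 'v cnf \<Rightarrow> 'v cnf" where
  "restrict_cnf \<sigma> \<Gamma> =
     image_mset the (filter_mset (\<lambda>c. c \<noteq> None) (image_mset (restrict_clause \<sigma>) \<Gamma>))"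

inductive up_refutes :: "'v cnf \<Rightarrow> bool" where
  empty: "{} \<in># F \<Longrightarrow> up_refutes F"
| unit: "{l} \<in># F \<Longrightarrow> up_refutes (restrict_cnf (neg_clause {lit_neg l}) F) \<Longrightarrow> up_refutes F"

definition up_implies :: "'v cnf \<Rightarrow> 'v clause \<Rightarrow> bool" where
  "up_implies \<Gamma> C \<longleftrightarrow> up_refutes (restrict_cnf (neg_clause C) \<Gamma>)"

definition up_implies_all :: "'v cnf \<Rightarrow> 'v cnf \<Rightarrow> bool" where
  "up_implies_all \<Gamma> \<Delta> \<longleftrightarrow> (\<forall>D\<in>#\<Delta>. up_implies \<Gamma> D)"

fun eval_lit :: "('v \<Rightarrow> bool) \<Rightarrow> 'v lit \<Rightarrow> bool" where
  "eval_lit \<alpha> (Pos x) = \<alpha> x" | "eval_lit \<alpha> (Neg x) = (\<not> \<alpha> x)"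

fun eval_sval :: "('v \<Rightarrow> bool) \<Rightarrow> 'v sval \<Rightarrow> bool" where
  "eval_sval \<alpha> F0 = False" | "eval_sval \<alpha> T1 = True" | "eval_sval \<alpha> (L l) = eval_lit \<alpha> l"

definition comp_assign :: "('v \<Rightarrow> bool) \<Rightarrow> 'v subst \<Rightarrow> ('v \<Rightarrow> bool)" where
  "comp_assign \<tau> \<sigma> = (\<lambda>x. eval_sval \<tau> (\<sigma> x))"

definition extends :: "('v \<Rightarrow> bool) \<Rightarrow> 'v subst \<Rightarrow> bool" where
  "extends \<tau> \<sigma> \<longleftrightarrow> (\<forall>x. (\<sigma> x = T1 \<longrightarrow> \<tau> x) \<and> (\<sigma> x = F0 \<longrightarrow> \<not> \<tau> x))"

definition models :: "('v \<Rightarrow> bool) \<Rightarrow> 'v cnf \<Rightarrow> bool" where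
  "models \<alpha> \<Gamma> \<longleftrightarrow> (\<forall>C\<in>#\<Gamma>. \<exists>l\<in>C. eval_lit \<alpha> l)"

definition cost :: "'v list \<Rightarrow> ('v \<Rightarrow> bool) \<Rightarrow> nat" where
  "cost bs \<alpha> = (\<Sum>b\<leftarrow>bs. if \<alpha> b then 1 else 0)"

definition instance_cost_is :: "'v list \<Rightarrow> 'v cnf \<Rightarrow> nat \<Rightarrow> bool" where
  "instance_cost_is bs \<Gamma> k \<longleftrightarrow>
     (\<exists>\<alpha>. models \<alpha> \<Gamma> \<and> cost bs \<alpha> = k) \<and> (\<forall>\<alpha>. models \<alpha> \<Gamma> \<longrightarrow> k \<le> cost bs \<alpha>)"

text \<open>MaxSAT instance encoded with blocking variables:
  \<open>\<Gamma> = H \<union> {C_1 \<or> b_1, \<dots>, C_m \<or> b_m}\<close> with distinct fresh \<open>b_i\<close>.\<close>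
definition blocking_instance :: "'v cnf \<Rightarrow> ('v clause \<times> 'v) list \<Rightarrow> bool" where
  "blocking_instance H soft \<longleftrightarrow>
     (\<forall>C\<in>#H. finite C) \<and> (\<forall>(C, b)\<in>set soft. finite C) \<and>
     distinct (map snd soft) \<and>
     (\<forall>b\<in>set (map snd soft). b \<notin> vars_cnf H \<and> (\<forall>(C, b')\<in>set soft. b \<notin> vars_clause C))"

definition blocking_cnf :: "'v cnf \<Rightarrow> ('v clause \<times> 'v) list \<Rightarrow> 'v cnf" where
  "blocking_cnf H soft = H + mset (map (\<lambda>(C, b). insert (Pos b) C) soft)"

definition cost_LPR :: "'v list \<Rightarrow> 'v cnf \<Rightarrow> 'v clause \<Rightarrow> bool" where
  "cost_LPR bs \<Gamma> C \<longleftrightarrow> \<not> tautology C \<and>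
     (\<exists>\<sigma>. is_partial_assignment \<sigma> \<and> sdom \<sigma> = sdom (neg_clause C) \<and>
          (\<exists>!x. \<sigma> x \<noteq> neg_clause C x) \<and>
          up_implies_all (restrict_cnf (neg_clause C) \<Gamma>) (restrict_cnf \<sigma> (\<Gamma> + {#C#})) \<and>
          (\<forall>\<tau>. extends \<tau> (neg_clause C) \<longrightarrow> cost bs (comp_assign \<tau> \<sigma>) \<le> cost bs \<tau>))"

definition cost_BC :: "'v list \<Rightarrow> 'v cnf \<Rightarrow> 'v clause \<Rightarrow> 'v lit \<Rightarrow> bool" where
  "cost_BC bs \<Gamma> E l \<longleftrightarrow> l \<in> E \<and>
     (\<forall>F\<in>#\<Gamma>. lit_neg l \<in> F \<longrightarrow> tautology ((E - {l}) \<union> (F - {lit_neg l}))) \<and>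
     (\<forall>b\<in>set bs. l \<noteq> Pos b)"

definition deriv_step ::
  "('v cnf \<Rightarrow> 'v clause \<Rightarrow> bool) \<Rightarrow> 'v cnf \<Rightarrow> 'v clause list \<Rightarrow> 'v clause \<Rightarrow> bool" where
  "deriv_step red \<Gamma> prev D \<longleftrightarrow>
     D \<in># \<Gamma>
   \<or> (finite D \<and> (\<exists>A\<in>set prev. A \<subseteq> D))
   \<or> (\<exists>A B x. insert (Pos x) A \<in> set prev \<and> insert (Neg x) B \<in> set prev \<and> D = A \<union> B)
   \<or> (finite D \<and> red (\<Gamma> + mset prev) D \<and> vars_clause D \<subseteq> vars_cnf \<Gamma>)"

definition derivation ::
  "('v cnf \<Rightarrow> 'v clause \<Rightarrow> bool) \<Rightarrow> 'v cnf \<Rightarrow> 'v clause list \<Rightarrow> bool" where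
  "derivation red \<Gamma> Ds \<longleftrightarrow> (\<forall>i<length Ds. deriv_step red \<Gamma> (take i Ds) (Ds ! i))"

definition cost_LPR_derivation :: "'v list \<Rightarrow> 'v cnf \<Rightarrow> 'v clause list \<Rightarrow> bool" where
  "cost_LPR_derivation bs \<Gamma> Ds \<longleftrightarrow> derivation (cost_LPR bs) \<Gamma> Ds"

definition cost_BC_derivation :: "'v list \<Rightarrow> 'v cnf \<Rightarrow> 'v clause list \<Rightarrow> bool" where
  "cost_BC_derivation bs \<Gamma> Ds \<longleftrightarrow> derivation (\<lambda>\<Delta> D. \<exists>l. cost_BC bs \<Delta> D l) \<Gamma> Ds"

end

theory Submission
  imports Defs
begin

(* Every rule of either calculus preserves, for each blocking variable b, the existence of a
   model in which b is false; for input clauses, weakening and resolution this is soundness.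
   In the instance {x \/ b1, ~x \/ b2} every model sets b1 or b2, so the cost is 1, yet each
   b_i is false in some model, so no derivation contains the unit clause b_i. *)

lemma eval_lit_lit_neg [simp]: "eval_lit \<alpha> (lit_neg l) \<longleftrightarrow> \<not> eval_lit \<alpha> l"
  by (cases l) auto

lemma eval_sval_sval_neg [simp]: "eval_sval \<alpha> (sval_neg v) \<longleftrightarrow> \<not> eval_sval \<alpha> v"
  by (cases v) auto

lemma eval_lit_comp_assign: "eval_lit (comp_assign \<alpha> \<sigma>) l = eval_sval \<alpha> (subst_lit \<sigma> l)"
  by (cases l) (auto simp: comp_assign_def)

lemma lit_var_eq_cases: "lit_var k = lit_var l \<Longrightarrow> k = l \<or> k = lit_neg l"
  by (cases k; cases l) auto

lemma models_empty [simp]: "models \<alpha> {#}"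
  by (simp add: models_def)

lemma models_plus [simp]: "models \<alpha> (F + G) \<longleftrightarrow> models \<alpha> F \<and> models \<alpha> G"
  unfolding models_def by auto

lemma models_add_mset [simp]:
  "models \<alpha> (add_mset C F) \<longleftrightarrow> (\<exists>l\<in>C. eval_lit \<alpha> l) \<and> models \<alpha> F"
  unfolding models_def by auto

lemma restrict_clause_sat_iff:
  "(\<forall>D. restrict_clause \<sigma> C = Some D \<longrightarrow> (\<exists>m\<in>D. eval_lit \<alpha> m))
     \<longleftrightarrow> (\<exists>l\<in>C. eval_lit (comp_assign \<alpha> \<sigma>) l)"
proof (cases "\<exists>l\<in>C. subst_lit \<sigma> l = T1")
  case True
  then show ?thesis
    by (force simp: restrict_clause_def eval_lit_comp_assign)
next
  case False
  define D where "D = {m. \<exists>l\<in>C. subst_lit \<sigma> l = L m}"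
  have "(\<exists>l\<in>C. eval_lit (comp_assign \<alpha> \<sigma>) l) \<longleftrightarrow> (\<exists>m\<in>D. eval_lit \<alpha> m)"
  proof
    assume "\<exists>l\<in>C. eval_lit (comp_assign \<alpha> \<sigma>) l"
    then obtain l where "l \<in> C" and "eval_sval \<alpha> (subst_lit \<sigma> l)"
      by (auto simp: eval_lit_comp_assign)
    with False show "\<exists>m\<in>D. eval_lit \<alpha> m"
      by (cases "subst_lit \<sigma> l") (auto simp: D_def)
  next
    assume "\<exists>m\<in>D. eval_lit \<alpha> m"
    then show "\<exists>l\<in>C. eval_lit (comp_assign \<alpha> \<sigma>) l"
      by (auto simp: D_def eval_lit_comp_assign) (metis eval_sval.simps(3))
  qed
  moreover have "tautology D \<Longrightarrow> \<exists>m\<in>D. eval_lit \<alpha> m"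
    unfolding tautology_def by (metis eval_lit.simps)
  ultimately show ?thesis
    using False by (auto simp: restrict_clause_def D_def[symmetric])
qed

lemma models_restrict_cnf_iff:
  "models \<alpha> (restrict_cnf \<sigma> F) \<longleftrightarrow> models (comp_assign \<alpha> \<sigma>) F"
  unfolding models_def restrict_cnf_def restrict_clause_sat_iff[symmetric] by force

lemma comp_assign_neg_clause:
  assumes "\<forall>l\<in>C. \<not> eval_lit \<alpha> l"
  shows "comp_assign \<alpha> (neg_clause C) = \<alpha>"
proof
  fix x
  from assms have "Pos x \<in> C \<Longrightarrow> \<not> \<alpha> x" and "Neg x \<in> C \<Longrightarrow> \<alpha> x"
    by force+
  then show "comp_assign \<alpha> (neg_clause C) x = \<alpha> x"
    by (auto simp: comp_assign_def neg_clause_def)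
qed

lemma extends_if_comp_assign_eq: "comp_assign \<tau> \<sigma> = \<tau> \<Longrightarrow> extends \<tau> \<sigma>"
  unfolding extends_def comp_assign_def by (metis eval_sval.simps(1,2))

lemma up_refutes_unsat: "up_refutes F \<Longrightarrow> \<not> models \<alpha> F"
proof (induction rule: up_refutes.induct)
  case (empty F)
  then show ?case by (auto simp: models_def)
next
  case (unit l F)
  show ?case
  proof
    assume F: "models \<alpha> F"
    with unit.hyps have "eval_lit \<alpha> l" by (auto simp: models_def)
    then have "comp_assign \<alpha> (neg_clause {lit_neg l}) = \<alpha>"
      by (simp add: comp_assign_neg_clause)
    with F have "models \<alpha> (restrict_cnf (neg_clause {lit_neg l}) F)"
      by (simp add: models_restrict_cnf_iff)
    with unit.IH show False by blast
  qed
qed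

lemma up_implies_sound:
  assumes "up_implies F C" and "models \<alpha> F"
  shows "\<exists>l\<in>C. eval_lit \<alpha> l"
proof (rule ccontr)
  assume "\<not> (\<exists>l\<in>C. eval_lit \<alpha> l)"
  then have "comp_assign \<alpha> (neg_clause C) = \<alpha>" by (simp add: comp_assign_neg_clause)
  with assms(2) have "models \<alpha> (restrict_cnf (neg_clause C) F)"
    by (simp add: models_restrict_cnf_iff)
  with assms(1) show False
    unfolding up_implies_def using up_refutes_unsat by blast
qed

lemma up_implies_all_models:
  "up_implies_all F G \<Longrightarrow> models \<alpha> F \<Longrightarrow> models \<alpha> G"
  by (auto simp: up_implies_all_def models_def intro: up_implies_sound)

lemma cost_Nil [simp]: "cost [] f = 0"
  by (simp add: cost_def)

lemma cost_Cons [simp]: "cost (a # bs) f = (if f a then 1 else 0) + cost bs f"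
  by (simp add: cost_def)

lemma cost_fun_upd_True:
  assumes "distinct bs" and "b \<in> set bs" and "\<not> f b"
  shows "cost bs (f(b := True)) = Suc (cost bs f)"
  using assms
proof (induction bs)
  case (Cons a bs)
  show ?case
  proof (cases "a = b")
    case True
    with Cons.prems have "cost bs (f(b := True)) = cost bs f"
      unfolding cost_def by (intro arg_cong[where f = sum_list] map_cong) auto
    with True Cons.prems show ?thesis by (simp only: cost_Cons fun_upd_same if_True) simp
  next
    case False
    with Cons show ?thesis by simp
  qed
qed simp

definition sat_with_false :: "'v \<Rightarrow> 'v cnf \<Rightarrow> bool" where
  "sat_with_false b F \<longleftrightarrow> (\<exists>\<alpha>. models \<alpha> F \<and> \<not> \<alpha> b)"

lemma sat_with_false_add_mset_if_sat:
  "models \<alpha> F \<Longrightarrow> \<not> \<alpha> b \<Longrightarrow> \<exists>l\<in>C. eval_lit \<alpha> l \<Longrightarrow> sat_with_false b (add_mset C F)"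
  unfolding sat_with_false_def by auto

text \<open>The witnessing substitution \<open>\<sigma>\<close> turns a model \<open>\<alpha>\<close> falsifying \<open>C\<close> into the model
  \<open>\<alpha> \<circ> \<sigma>\<close> of \<open>F + C\<close>, which differs from \<open>\<alpha>\<close> in one variable only. If that variable were a
  blocking variable switched on, the cost would go up, contradicting the cost condition.\<close>
lemma cost_LPR_preserves_sat_with_false:
  assumes "cost_LPR bs F C" and "sat_with_false b F" and "distinct bs" and "b \<in> set bs"
  shows "sat_with_false b (add_mset C F)"
proof -
  obtain \<alpha> where F: "models \<alpha> F" and b: "\<not> \<alpha> b"
    using assms(2) by (auto simp: sat_with_false_def)
  show ?thesis
  proof (cases "\<exists>l\<in>C. eval_lit \<alpha> l")
    case True
    with F b show ?thesis by (rule sat_with_false_add_mset_if_sat)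
  next
    case False
    then have \<alpha>_fixed: "comp_assign \<alpha> (neg_clause C) = \<alpha>"
      by (simp add: comp_assign_neg_clause)
    obtain \<sigma> where
      "\<exists>!x. \<sigma> x \<noteq> neg_clause C x" and
      up: "up_implies_all (restrict_cnf (neg_clause C) F) (restrict_cnf \<sigma> (F + {#C#}))" and
      cost_le: "\<And>\<tau>. extends \<tau> (neg_clause C) \<Longrightarrow> cost bs (comp_assign \<tau> \<sigma>) \<le> cost bs \<tau>"
      using assms(1) unfolding cost_LPR_def by blast
    then obtain x where only_x: "\<And>y. \<sigma> y \<noteq> neg_clause C y \<Longrightarrow> y = x"
      by blast
    define \<beta> where "\<beta> = comp_assign \<alpha> \<sigma>"
    from F \<alpha>_fixed have "models \<alpha> (restrict_cnf (neg_clause C) F)"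
      by (simp add: models_restrict_cnf_iff)
    with up have "models \<alpha> (restrict_cnf \<sigma> (F + {#C#}))"
      by (rule up_implies_all_models)
    then have "models \<beta> (add_mset C F)"
      by (simp add: \<beta>_def models_restrict_cnf_iff)
    moreover have "\<not> \<beta> b"
    proof
      assume "\<beta> b"
      have agree: "\<beta> y = \<alpha> y" if "y \<noteq> x" for y
      proof -
        from only_x that have "\<sigma> y = neg_clause C y" by blast
        then have "\<beta> y = comp_assign \<alpha> (neg_clause C) y"
          by (simp add: \<beta>_def comp_assign_def)
        with \<alpha>_fixed show ?thesis by simp
      qed
      with \<open>\<beta> b\<close> b have "b = x" by blast
      with agree \<open>\<beta> b\<close> have "\<beta> = \<alpha>(b := True)"
        by (auto simp: fun_eq_iff)
      with assms(3,4) b have "cost bs \<beta> = Suc (cost bs \<alpha>)"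
        by (simp add: cost_fun_upd_True)
      moreover have "cost bs \<beta> \<le> cost bs \<alpha>"
        unfolding \<beta>_def by (rule cost_le) (rule extends_if_comp_assign_eq[OF \<alpha>_fixed])
      ultimately show False by simp
    qed
    ultimately show ?thesis by (auto simp: sat_with_false_def)
  qed
qed

lemma eval_lit_flip_var:
  "eval_lit (\<alpha>(v := \<not> \<alpha> v)) k \<longleftrightarrow> (if lit_var k = v then \<not> eval_lit \<alpha> k else eval_lit \<alpha> k)"
  by (cases k) auto

text \<open>Flipping the variable of the blocked literal \<open>l\<close> in a model falsifying \<open>E\<close> satisfies \<open>E\<close>;
  every clause of \<open>F\<close> that loses its only true literal \<open>\<not>l\<close> stays satisfied, because its
  resolvent with \<open>E\<close> on \<open>l\<close> is a tautology. The flipped variable is not \<open>b\<close>: the literal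
  \<open>l\<close> is not \<open>b\<close> by the cost-BC condition, and not \<open>\<not>b\<close> because \<open>l\<close> is false.\<close>
lemma cost_BC_preserves_sat_with_false:
  assumes "cost_BC bs F E l" and "sat_with_false b F" and "b \<in> set bs"
  shows "sat_with_false b (add_mset E F)"
proof -
  obtain \<alpha> where F: "models \<alpha> F" and b: "\<not> \<alpha> b"
    using assms(2) by (auto simp: sat_with_false_def)
  have "l \<in> E" and taut: "\<And>G. G \<in># F \<Longrightarrow> lit_neg l \<in> G \<Longrightarrow> tautology ((E - {l}) \<union> (G - {lit_neg l}))"
    and not_blocking: "l \<noteq> Pos b"
    using assms(1,3) unfolding cost_BC_def by blast+
  show ?thesis
  proof (cases "\<exists>k\<in>E. eval_lit \<alpha> k")
    case True
    with F b show ?thesis by (rule sat_with_false_add_mset_if_sat)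
  next
    case False
    define v where "v = lit_var l"
    define \<alpha>' where "\<alpha>' = \<alpha>(v := \<not> \<alpha> v)"
    have l_false: "\<not> eval_lit \<alpha> l" using False \<open>l \<in> E\<close> by blast
    have same_var: "lit_var k = v \<Longrightarrow> k = l \<or> k = lit_neg l" for k
      unfolding v_def by (rule lit_var_eq_cases)
    have eval_\<alpha>': "eval_lit \<alpha>' k \<longleftrightarrow> (if lit_var k = v then \<not> eval_lit \<alpha> k else eval_lit \<alpha> k)" for k
      unfolding \<alpha>'_def by (rule eval_lit_flip_var)
    have rest_false: "\<not> eval_lit \<alpha>' k" if "k \<in> E - {l}" for k
    proof -
      from False that have "\<not> eval_lit \<alpha> k" by blast
      with l_false have "k \<noteq> lit_neg l" by auto
      with that same_var have "lit_var k \<noteq> v" by blast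
      with \<open>\<not> eval_lit \<alpha> k\<close> eval_\<alpha>' show ?thesis by simp
    qed
    have "models \<alpha>' F"
      unfolding models_def
    proof
      fix G assume "G \<in># F"
      with F obtain k where "k \<in> G" "eval_lit \<alpha> k" by (auto simp: models_def)
      show "\<exists>k\<in>G. eval_lit \<alpha>' k"
      proof (cases "lit_var k = v")
        case False
        with \<open>k \<in> G\<close> \<open>eval_lit \<alpha> k\<close> eval_\<alpha>' show ?thesis by auto
      next
        case True
        with \<open>eval_lit \<alpha> k\<close> l_false same_var have "k = lit_neg l" by blast
        with taut \<open>G \<in># F\<close> \<open>k \<in> G\<close> obtain y where
          "Pos y \<in> (E - {l}) \<union> (G - {lit_neg l})" "Neg y \<in> (E - {l}) \<union> (G - {lit_neg l})"
          unfolding tautology_def by blast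
        with rest_false show ?thesis by (metis Diff_iff Un_iff eval_lit.simps)
      qed
    qed
    moreover have "eval_lit \<alpha>' l"
      using l_false eval_\<alpha>' by (simp add: v_def)
    moreover have "v \<noteq> b"
      using not_blocking l_false b unfolding v_def by (cases l) auto
    then have "\<not> \<alpha>' b" using b by (simp add: \<alpha>'_def)
    ultimately show ?thesis
      using \<open>l \<in> E\<close> unfolding sat_with_false_def by auto
  qed
qed

lemma derivation_snoc:
  "derivation red \<Gamma> (Ds @ [D]) \<longleftrightarrow> derivation red \<Gamma> Ds \<and> deriv_step red \<Gamma> Ds D"
  by (auto simp: derivation_def nth_append less_Suc_eq)

lemma deriv_step_preserves_sat_with_false:
  assumes red: "\<And>F. red F D \<Longrightarrow> sat_with_false b F \<Longrightarrow> sat_with_false b (add_mset D F)"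
    and step: "deriv_step red \<Gamma> prev D"
    and sat: "sat_with_false b (\<Gamma> + mset prev)"
  shows "sat_with_false b (add_mset D (\<Gamma> + mset prev))"
proof (cases "red (\<Gamma> + mset prev) D")
  case True
  with red sat show ?thesis by blast
next
  case False
  obtain \<alpha> where \<alpha>: "models \<alpha> (\<Gamma> + mset prev)" "\<not> \<alpha> b"
    using sat by (auto simp: sat_with_false_def)
  have sat_prev: "\<exists>l\<in>A. eval_lit \<alpha> l" if "A \<in> set prev" for A
    using \<alpha>(1) that by (simp add: models_def)
  from False step consider "D \<in># \<Gamma>" | A where "A \<in> set prev" "A \<subseteq> D"
    | A B x where "insert (Pos x) A \<in> set prev" "insert (Neg x) B \<in> set prev" "D = A \<union> B"
    unfolding deriv_step_def by blast
  then have "\<exists>l\<in>D. eval_lit \<alpha> l"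
  proof cases
    case 1
    with \<alpha>(1) show ?thesis by (simp add: models_def)
  next
    case (2 A)
    with sat_prev show ?thesis by blast
  next
    case (3 A B x)
    with sat_prev[of "insert (Pos x) A"] sat_prev[of "insert (Neg x) B"] show ?thesis
      by auto
  qed
  with \<alpha> show ?thesis by (rule sat_with_false_add_mset_if_sat)
qed

lemma derivation_preserves_sat_with_false:
  assumes red: "\<And>F D. red F D \<Longrightarrow> sat_with_false b F \<Longrightarrow> sat_with_false b (add_mset D F)"
    and "derivation red \<Gamma> Ds" and "sat_with_false b \<Gamma>"
  shows "sat_with_false b (\<Gamma> + mset Ds)"
  using assms(2)
proof (induction Ds rule: rev_induct)
  case Nil
  with assms(3) show ?case by simp
next
  case (snoc D Ds)
  then have "deriv_step red \<Gamma> Ds D" and "sat_with_false b (\<Gamma> + mset Ds)"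
    by (simp_all add: derivation_snoc)
  with red have "sat_with_false b (add_mset D (\<Gamma> + mset Ds))"
    by (rule deriv_step_preserves_sat_with_false)
  then show ?case by simp
qed

lemma derivation_avoids_unit:
  assumes "\<And>F D. red F D \<Longrightarrow> sat_with_false b F \<Longrightarrow> sat_with_false b (add_mset D F)"
    and "derivation red \<Gamma> Ds" and "sat_with_false b \<Gamma>"
  shows "{Pos b} \<notin> set Ds"
proof
  assume "{Pos b} \<in> set Ds"
  from assms have "sat_with_false b (\<Gamma> + mset Ds)"
    by (rule derivation_preserves_sat_with_false)
  then obtain \<alpha> where "models \<alpha> (mset Ds)" and "\<not> \<alpha> b"
    by (auto simp: sat_with_false_def)
  with \<open>{Pos b} \<in> set Ds\<close> show False
    by (auto simp: models_def)
qed

lemma cost_LPR_derivation_avoids_unit: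
  assumes "cost_LPR_derivation bs \<Gamma> Ds" and "sat_with_false b \<Gamma>"
    and "distinct bs" and "b \<in> set bs"
  shows "{Pos b} \<notin> set Ds"
proof (rule derivation_avoids_unit)
  fix F D assume "cost_LPR bs F D" and "sat_with_false b F"
  then show "sat_with_false b (add_mset D F)"
    using assms(3,4) by (rule cost_LPR_preserves_sat_with_false)
next
  show "derivation (cost_LPR bs) \<Gamma> Ds"
    using assms(1) by (simp add: cost_LPR_derivation_def)
qed fact

lemma cost_BC_derivation_avoids_unit:
  assumes "cost_BC_derivation bs \<Gamma> Ds" and "sat_with_false b \<Gamma>" and "b \<in> set bs"
  shows "{Pos b} \<notin> set Ds"
proof (rule derivation_avoids_unit)
  fix F D assume "\<exists>l. cost_BC bs F D l" and "sat_with_false b F"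
  then show "sat_with_false b (add_mset D F)"
    using assms(3) by (metis cost_BC_preserves_sat_with_false)
next
  show "derivation (\<lambda>F D. \<exists>l. cost_BC bs F D l) \<Gamma> Ds"
    using assms(1) by (simp add: cost_BC_derivation_def)
qed fact

definition complementary_softs :: "(nat clause \<times> nat) list" where
  "complementary_softs = [({Pos 0}, 1), ({Neg 0}, 2)]"

lemma blocking_instance_complementary_softs: "blocking_instance {#} complementary_softs"
  by (simp add: blocking_instance_def complementary_softs_def vars_cnf_def vars_clause_def)

lemma models_complementary_softs_iff:
  "models \<alpha> (blocking_cnf {#} complementary_softs) \<longleftrightarrow> (\<alpha> 1 \<or> \<alpha> 0) \<and> (\<alpha> 2 \<or> \<not> \<alpha> 0)"
  by (simp add: blocking_cnf_def complementary_softs_def)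

lemma instance_cost_complementary_softs:
  "instance_cost_is (map snd complementary_softs) (blocking_cnf {#} complementary_softs) 1"
proof -
  have cost: "cost (map snd complementary_softs) \<alpha> = (if \<alpha> 1 then 1 else 0) + (if \<alpha> 2 then 1 else 0)"
    for \<alpha> :: "nat \<Rightarrow> bool"
    by (simp add: complementary_softs_def)
  have "models (\<lambda>v. v = 1) (blocking_cnf {#} complementary_softs)"
    by (simp add: models_complementary_softs_iff)
  moreover have "cost (map snd complementary_softs) (\<lambda>v. v = 1) = 1"
    by (simp add: cost)
  moreover have "1 \<le> cost (map snd complementary_softs) \<alpha>"
    if "models \<alpha> (blocking_cnf {#} complementary_softs)" for \<alpha>
    using that by (auto simp: models_complementary_softs_iff cost)
  ultimately show ?thesis
    unfolding instance_cost_is_def by blast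
qed

lemma sat_with_false_complementary_softs:
  assumes "b \<in> set (map snd complementary_softs)"
  shows "sat_with_false b (blocking_cnf {#} complementary_softs)"
proof -
  from assms have "b = 1 \<or> b = 2"
    by (simp add: complementary_softs_def)
  then show ?thesis
  proof
    assume "b = 1"
    have "models (\<lambda>v. v \<noteq> 1) (blocking_cnf {#} complementary_softs)"
      by (simp add: models_complementary_softs_iff)
    with \<open>b = 1\<close> show ?thesis
      unfolding sat_with_false_def by blast
  next
    assume "b = 2"
    have "models (\<lambda>v. v = 1) (blocking_cnf {#} complementary_softs)"
      by (simp add: models_complementary_softs_iff)
    with \<open>b = 2\<close> show ?thesis
      unfolding sat_with_false_def by force
  qed
qed

theorem corollary5p2:
  shows "\<exists>(H :: nat cnf) soft.
           blocking_instance H soft \<and>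
           instance_cost_is (map snd soft) (blocking_cnf H soft) 1 \<and>
           (\<forall>Ds. cost_LPR_derivation (map snd soft) (blocking_cnf H soft) Ds \<longrightarrow>
                   (\<forall>b\<in>set (map snd soft). {Pos b} \<notin> set Ds)) \<and>
           (\<forall>Ds. cost_BC_derivation (map snd soft) (blocking_cnf H soft) Ds \<longrightarrow>
                   (\<forall>b\<in>set (map snd soft). {Pos b} \<notin> set Ds))"
proof -
  let ?bs = "map snd complementary_softs" and ?\<Gamma> = "blocking_cnf {#} complementary_softs"
  have distinct: "distinct ?bs"
    by (simp add: complementary_softs_def)
  have "{Pos b} \<notin> set Ds" if "cost_LPR_derivation ?bs ?\<Gamma> Ds" and "b \<in> set ?bs" for Ds b
    using that(1) sat_with_false_complementary_softs[OF that(2)] distinct that(2)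
    by (rule cost_LPR_derivation_avoids_unit)
  moreover have "{Pos b} \<notin> set Ds" if "cost_BC_derivation ?bs ?\<Gamma> Ds" and "b \<in> set ?bs" for Ds b
    using that(1) sat_with_false_complementary_softs[OF that(2)] that(2)
    by (rule cost_BC_derivation_avoids_unit)
  ultimately show ?thesis
    using blocking_instance_complementary_softs instance_cost_complementary_softs by blast
qed

end
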